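(* Assume $W$ satisfies conditions (i), (ii) and (iv) below on $[0,T]$. Then for all $0\le t_0<t_1\le t_2<t_3\le T$, $$\lim_{n\to\infty}\sum_{j=\lfloor nt_0/2\rfloor+1}^{\lfloor nt_1/2\rfloor}\ \sum_{k=\lfloor nt_2/2\rfloor+1}^{\lfloor nt_3/2\rfloor}\Big|\beta_n(2j-1,2k-1)^2-\beta_n(2j-1,2k-2)^2-\beta_n(2j-2,2k-1)^2+\beta_n(2j-2,2k-2)^2\Big|=0.$$
   Context: $W=\{W_t,t\ge0\}$ is a centered Gaussian process with continuous covariance, and $\beta_n(j,k)=\mathbb E[(W_{(j+1)/n}-W_{j/n})(W_{(k+1)/n}-W_{k/n})]$. (The summand equals $|\langle\partial_{\frac{2j-1}{n}}^{\otimes2}-\partial_{\frac{2j-2}{n}}^{\otimes2},\partial_{\frac{2k-1}{n}}^{\otimes2}-\partial_{\frac{2k-2}{n}}^{\otimes2}\rangle_{\mathfrak H^{\otimes2}}|$ with $\partial_{j/n}=\mathbf 1_{[j/n,(j+1)/n]}$.) Conditions (constants may depend on $T$): (i) $\mathbb E[(W_t-W_{t-s})^2]\le C_1 s^{1/2}$ for $0<s\le t\le T$. (ii) There are $1<\alpha\le3/2$, $\beta=\frac32-\alpha$ such that for $s>0$, $2s\le r,t\le T$, $|t-r|\ge2s$: $|\mathbb E[(W_t-W_{t-s})(W_r-W_{r-s})]|\le C_1s^2|t-r|^{-\alpha}(t\wedge r-s)^{-\beta}+C_1s^2|t-r|^{-3/2}$. (iv) For $0<s\le t\le T-s$: $|\mathbb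 E[W_t(W_{t+s}-W_{t-s})]|\le C_3s^{1/2}$ if $t<2s$ and $\le C_3s(t-s)^{-1/2}$ if $t\ge2s$; for $0<s\le r\le T$: $|\mathbb E[W_r(W_{t+s}-W_{t-s})]|\le C_3s^{1/2}$ if $t<2s$ or $|t-r|<2s$, and $\le C_3s(t-s)^{-1/2}+C_3s|t-r|^{-1/2}$ if $t\ge2s$ and $|t-r|\ge2s$; and for $t>2s$: $|\mathbb E[W_s(W_t-W_{t-s})]|\le C_3s^{1/2+\gamma}(t-2s)^{-\gamma}$ for some $\gamma>0$. *)

theory Defs
  imports "HOL-Probability.Probability"
begin

definition gaussian_rv :: "'a measure \<Rightarrow> ('a \<Rightarrow> real) \<Rightarrow> bool" where
  "gaussian_rv M X \<longleftrightarrow> X \<in> borel_measurable M \<and>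
     ((\<exists>\<mu> \<sigma>. \<sigma> > 0 \<and> distributed M lborel X (\<lambda>x. ennreal (normal_density \<mu> \<sigma> x)))
      \<or> (\<exists>c. distr M borel X = return borel c))"

definition cov :: "'a measure \<Rightarrow> (real \<Rightarrow> 'a \<Rightarrow> real) \<Rightarrow> real \<Rightarrow> real \<Rightarrow> real" where
  "cov M W s t = integral\<^sup>L M (\<lambda>\<omega>. W s \<omega> * W t \<omega>)"

definition centered_gaussian_process :: "'a measure \<Rightarrow> (real \<Rightarrow> 'a \<Rightarrow> real) \<Rightarrow> bool" where
  "centered_gaussian_process M W \<longleftrightarrow>
     prob_space M \<and>
     (\<forall>F a. finite F \<and> F \<subseteq> {0..} \<longrightarrow> gaussian_rv M (\<lambda>\<omega>. \<Sum>t\<in>F. a t * W t \<omega>)) \<and>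
     (\<forall>t\<ge>0. integral\<^sup>L M (W t) = 0) \<and>
     continuous_on ({0..} \<times> {0..}) (\<lambda>(s, t). cov M W s t)"

definition beta_n :: "'a measure \<Rightarrow> (real \<Rightarrow> 'a \<Rightarrow> real) \<Rightarrow> nat \<Rightarrow> nat \<Rightarrow> nat \<Rightarrow> real" where
  "beta_n M W n j k = integral\<^sup>L M (\<lambda>\<omega>.
      (W ((real j + 1) / real n) \<omega> - W (real j / real n) \<omega>) *
      (W ((real k + 1) / real n) \<omega> - W (real k / real n) \<omega>))"

definition cond_i :: "'a measure \<Rightarrow> (real \<Rightarrow> 'a \<Rightarrow> real) \<Rightarrow> real \<Rightarrow> bool" where
  "cond_i M W T \<longleftrightarrow> (\<exists>C1>0. \<forall>s t. 0 < s \<and> s \<le> t \<and> t \<le> T \<longrightarrow>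
      integral\<^sup>L M (\<lambda>\<omega>. (W t \<omega> - W (t - s) \<omega>)\<^sup>2) \<le> C1 * s powr (1/2))"

definition cond_ii :: "'a measure \<Rightarrow> (real \<Rightarrow> 'a \<Rightarrow> real) \<Rightarrow> real \<Rightarrow> bool" where
  "cond_ii M W T \<longleftrightarrow> (\<exists>C1>0. \<exists>\<alpha>. 1 < \<alpha> \<and> \<alpha> \<le> 3/2 \<and>
     (\<forall>s r t. 0 < s \<and> 2 * s \<le> r \<and> r \<le> T \<and> 2 * s \<le> t \<and> t \<le> T \<and> \<bar>t - r\<bar> \<ge> 2 * s \<longrightarrow>
        \<bar>integral\<^sup>L M (\<lambda>\<omega>. (W t \<omega> - W (t - s) \<omega>) * (W r \<omega> - W (r - s) \<omega>))\<bar>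
          \<le> C1 * s\<^sup>2 * \<bar>t - r\<bar> powr (-\<alpha>) * (min t r - s) powr (-(3/2 - \<alpha>))
             + C1 * s\<^sup>2 * \<bar>t - r\<bar> powr (-(3/2))))"

definition cond_iv :: "'a measure \<Rightarrow> (real \<Rightarrow> 'a \<Rightarrow> real) \<Rightarrow> real \<Rightarrow> bool" where
  "cond_iv M W T \<longleftrightarrow> (\<exists>C3>0. \<exists>\<gamma>>0.
     (\<forall>s t. 0 < s \<and> s \<le> t \<and> t \<le> T - s \<longrightarrow>
        \<bar>integral\<^sup>L M (\<lambda>\<omega>. W t \<omega> * (W (t + s) \<omega> - W (t - s) \<omega>))\<bar>
          \<le> (if t < 2 * s then C3 * s powr (1/2) else C3 * s * (t - s) powr (-(1/2)))) \<and>
     (\<forall>s t r. 0 < s \<and> s \<le> t \<and> t \<le> T - s \<and> s \<le> r \<and> r \<le> T \<longrightarrow>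
        \<bar>integral\<^sup>L M (\<lambda>\<omega>. W r \<omega> * (W (t + s) \<omega> - W (t - s) \<omega>))\<bar>
          \<le> (if t < 2 * s \<or> \<bar>t - r\<bar> < 2 * s then C3 * s powr (1/2)
              else C3 * s * (t - s) powr (-(1/2)) + C3 * s * \<bar>t - r\<bar> powr (-(1/2)))) \<and>
     (\<forall>s t. 0 < s \<and> 2 * s < t \<and> t \<le> T \<longrightarrow>
        \<bar>integral\<^sup>L M (\<lambda>\<omega>. W s \<omega> * (W t \<omega> - W (t - s) \<omega>))\<bar>
          \<le> C3 * s powr (1/2 + \<gamma>) * (t - 2 * s) powr (-\<gamma>)))"

end

theory Submission
  imports Defs "HOL-Real_Asymp.Real_Asymp"
begin

(* Proof of Lemma 6.1.  Write a = 2j-p, b = 2k-q with p, q in {1,2}.  Each summand is at most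
   the sum of the four squares, so the double sum is bounded by the four block sums
     G(p,q) = sum_j sum_k beta_n(2j-p, 2k-q)^2,
   and it suffices to show G(p,q) = O(n^(-1/2)).  Only conditions (i) and (ii) are needed.

   * Condition (i) gives |beta_n(a,b)| <= C1/sqrt n; condition (ii) gives
     |beta_n(a,b)| <= 2C/(sqrt n |b-a|) when a, b >= 1 and |b-a| >= 2.  Hence for a >= 1
     and j < k, beta_n(2j-p,2k-q)^2 <= K/(n (k-j)^2).  Summing the tail
     sum_k 1/(k-j)^2 <= 2/(j1+1-j) and then the harmonic sum sum_{i<=j1} 1/i <= 2 sqrt(nT)
     bounds all rows with a >= 1 by O(n^(-1/2)).
   * The row a = 0 (j = 1, p = 2) is not covered by (ii).  There a Bessel-type inequality
     is used: the Gram matrix of the increments Delta_{2k-q} has row sums bounded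
     independently of n (diagonal by (i), off-diagonal by (ii) and
     sum_{k'} 1/|k-k'| = O(sqrt n)), so sum_k E[Delta_0 Delta_{2k-q}]^2 <= R E[Delta_0^2]
     = O(n^(-1/2)). *)

text \<open>A (possibly degenerate) Gaussian variable has a finite second moment; this is the only
  consequence of Gaussianity that the proof uses.\<close>
lemma integrable_square_gaussian_rv:
  assumes "gaussian_rv M X"
  shows "integrable M (\<lambda>\<omega>. (X \<omega>)\<^sup>2)"
proof -
  have [measurable]: "X \<in> borel_measurable M" using assms unfolding gaussian_rv_def by auto
  from assms consider (normal) \<mu> \<sigma> where "\<sigma> > 0"
      "distributed M lborel X (\<lambda>x. ennreal (normal_density \<mu> \<sigma> x))"
    | (degenerate) c where "distr M borel X = return borel c"
    unfolding gaussian_rv_def by blast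
  then show ?thesis
  proof cases
    case normal
    have "integrable lborel (\<lambda>x. normal_density \<mu> \<sigma> x * ((x - \<mu>)^2 + 2*\<mu>*(x-\<mu>) + \<mu>^2))"
      using integrable_normal_moment[of \<sigma> \<mu> 2] integrable_normal_moment[of \<sigma> \<mu> 1]
        integrable_normal_moment[of \<sigma> \<mu> 0] normal(1)
      by (simp add: distrib_left mult.left_commute[of _ "2*\<mu>"] mult.commute[of _ "\<mu>^2"])
    moreover have "\<And>x. (x - \<mu>)^2 + 2*\<mu>*(x-\<mu>) + \<mu>^2 = x^2"
      by (simp add: power2_eq_square algebra_simps)
    ultimately have "integrable lborel (\<lambda>x. normal_density \<mu> \<sigma> x * x^2)" by simp
    then show ?thesis
      using distributed_integrable[OF normal(2), of "\<lambda>x. x^2"] by (simp add: normal_density_nonneg)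
  next
    case degenerate
    have "integrable (return borel c) (\<lambda>x::real. x^2)"
      unfolding integrable_iff_bounded by (simp add: nn_integral_return)
    then have "integrable (distr M borel X) (\<lambda>x::real. x^2)" using degenerate by simp
    then show ?thesis by (subst (asm) integrable_distr_eq) auto
  qed
qed

lemma weighted_abs_mult_le:
  fixes a b l :: real
  assumes "l > 0"
  shows "\<bar>a * b\<bar> \<le> (l * a\<^sup>2 + b\<^sup>2 / l) / 2"
proof -
  have "2 * (l * \<bar>a\<bar>) * \<bar>b\<bar> \<le> (l * \<bar>a\<bar>)\<^sup>2 + \<bar>b\<bar>\<^sup>2" by (rule sum_squares_bound)
  then have "l * (2 * \<bar>a * b\<bar>) \<le> l * (l * a\<^sup>2 + b\<^sup>2 / l)"
    using assms by (simp add: power2_eq_square abs_mult algebra_simps)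
  then show ?thesis using assms by simp
qed

lemma integrable_mult_square_integrable:
  fixes f g :: "'a \<Rightarrow> real"
  assumes [measurable]: "f \<in> borel_measurable M" "g \<in> borel_measurable M"
    and "integrable M (\<lambda>x. (f x)\<^sup>2)" and "integrable M (\<lambda>x. (g x)\<^sup>2)"
  shows "integrable M (\<lambda>x. f x * g x)"
proof (rule Bochner_Integration.integrable_bound)
  show "integrable M (\<lambda>x. (1 * (f x)\<^sup>2 + (g x)\<^sup>2 / 1) / 2)" using assms by simp
  show "AE x in M. norm (f x * g x) \<le> norm ((1 * (f x)\<^sup>2 + (g x)\<^sup>2 / 1) / 2)"
    using weighted_abs_mult_le[of 1] by simp
qed simp

text \<open>The weighted AM-GM bound for \<open>E[fg]\<close>; it replaces Cauchy-Schwarz and avoids square roots.\<close>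
lemma abs_integral_mult_le:
  fixes f g :: "'a \<Rightarrow> real"
  assumes [measurable]: "f \<in> borel_measurable M" "g \<in> borel_measurable M"
    and f2: "integrable M (\<lambda>x. (f x)\<^sup>2)" and g2: "integrable M (\<lambda>x. (g x)\<^sup>2)" and "l > 0"
  shows "\<bar>integral\<^sup>L M (\<lambda>x. f x * g x)\<bar>
    \<le> (l * integral\<^sup>L M (\<lambda>x. (f x)\<^sup>2) + integral\<^sup>L M (\<lambda>x. (g x)\<^sup>2) / l) / 2"
proof -
  have "\<bar>integral\<^sup>L M (\<lambda>x. f x * g x)\<bar> \<le> integral\<^sup>L M (\<lambda>x. \<bar>f x * g x\<bar>)"
    by (rule Bochner_Integration.integral_abs_bound)
  also have "\<dots> \<le> integral\<^sup>L M (\<lambda>x. (l * (f x)\<^sup>2 + (g x)\<^sup>2 / l) / 2)"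
    using integrable_mult_square_integrable[OF assms(1-4)] f2 g2 weighted_abs_mult_le[OF \<open>l > 0\<close>]
    by (intro Bochner_Integration.integral_mono) auto
  also have "\<dots> = (l * integral\<^sup>L M (\<lambda>x. (f x)\<^sup>2) + integral\<^sup>L M (\<lambda>x. (g x)\<^sup>2) / l) / 2"
    using f2 g2 by simp
  finally show ?thesis .
qed

lemma quadratic_form_le_row_sum:
  fixes c :: "'i \<Rightarrow> real" and g :: "'i \<Rightarrow> 'i \<Rightarrow> real"
  assumes sym: "\<And>i i'. g i' i = g i i'" and row: "\<And>i. i \<in> I \<Longrightarrow> (\<Sum>i'\<in>I. \<bar>g i i'\<bar>) \<le> R"
  shows "(\<Sum>i\<in>I. \<Sum>i'\<in>I. c i * c i' * g i i') \<le> R * (\<Sum>i\<in>I. (c i)\<^sup>2)"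
proof -
  have "(\<Sum>i\<in>I. \<Sum>i'\<in>I. c i * c i' * g i i')
      \<le> (\<Sum>i\<in>I. \<Sum>i'\<in>I. ((c i)\<^sup>2 / 2 + (c i')\<^sup>2 / 2) * \<bar>g i i'\<bar>)"
  proof (intro sum_mono)
    fix i i'
    have "c i * c i' * g i i' \<le> \<bar>c i * c i'\<bar> * \<bar>g i i'\<bar>"
      by (metis abs_ge_self abs_mult)
    also have "\<dots> \<le> ((c i)\<^sup>2 / 2 + (c i')\<^sup>2 / 2) * \<bar>g i i'\<bar>"
      using weighted_abs_mult_le[of 1 "c i" "c i'"] by (intro mult_right_mono) auto
    finally show "c i * c i' * g i i' \<le> ((c i)\<^sup>2 / 2 + (c i')\<^sup>2 / 2) * \<bar>g i i'\<bar>" .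
  qed
  also have "\<dots> = (\<Sum>i\<in>I. (c i)\<^sup>2 * (\<Sum>i'\<in>I. \<bar>g i i'\<bar>))"
  proof -
    have "(\<Sum>i\<in>I. \<Sum>i'\<in>I. (c i')\<^sup>2 / 2 * \<bar>g i i'\<bar>) = (\<Sum>i\<in>I. \<Sum>i'\<in>I. (c i)\<^sup>2 / 2 * \<bar>g i i'\<bar>)"
      by (subst sum.swap) (simp add: sym)
    then show ?thesis
      by (simp add: distrib_right sum.distrib sum_distrib_left)
  qed
  also have "\<dots> \<le> (\<Sum>i\<in>I. (c i)\<^sup>2 * R)"
    by (intro sum_mono mult_left_mono row) auto
  finally show ?thesis by (simp add: sum_distrib_left mult.commute)
qed

text \<open>With \<open>c\<^sub>i = E[x y\<^sub>i]\<close> and \<open>Z = \<Sum>\<^sub>i c\<^sub>i y\<^sub>i\<close>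
  one has \<open>S = \<Sum>\<^sub>i c\<^sub>i\<^sup>2 = E[x Z]\<close> and \<open>E[Z\<^sup>2] \<le> R S\<close>, so AM-GM with weight \<open>R\<close> gives
  \<open>S \<le> (R E[x\<^sup>2] + S)/2\<close>.\<close>
lemma bessel_gram_row_bound:
  fixes x :: "'a \<Rightarrow> real" and y :: "'i \<Rightarrow> 'a \<Rightarrow> real"
  assumes [measurable]: "x \<in> borel_measurable M" "\<And>i. y i \<in> borel_measurable M"
    and x2: "integrable M (\<lambda>w. (x w)\<^sup>2)" and y2: "\<And>i. integrable M (\<lambda>w. (y i w)\<^sup>2)"
    and "R > 0"
    and row: "\<And>i. i \<in> I \<Longrightarrow> (\<Sum>i'\<in>I. \<bar>integral\<^sup>L M (\<lambda>w. y i w * y i' w)\<bar>) \<le> R"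
  shows "(\<Sum>i\<in>I. (integral\<^sup>L M (\<lambda>w. x w * y i w))\<^sup>2) \<le> R * integral\<^sup>L M (\<lambda>w. (x w)\<^sup>2)"
proof -
  define c where "c i = integral\<^sup>L M (\<lambda>w. x w * y i w)" for i
  define g where "g i i' = integral\<^sup>L M (\<lambda>w. y i w * y i' w)" for i i'
  define Z where "Z w = (\<Sum>i\<in>I. c i * y i w)" for w
  define S where "S = (\<Sum>i\<in>I. (c i)\<^sup>2)"
  have yy: "integrable M (\<lambda>w. y i w * y i' w)" for i i'
    using y2 by (intro integrable_mult_square_integrable) auto
  have xy: "integrable M (\<lambda>w. x w * y i w)" for i
    using x2 y2 by (intro integrable_mult_square_integrable) auto
  have [measurable]: "Z \<in> borel_measurable M" unfolding Z_def by measurable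
  have Z_square: "(Z w)\<^sup>2 = (\<Sum>i\<in>I. \<Sum>i'\<in>I. c i * c i' * (y i w * y i' w))" for w
    unfolding Z_def power2_eq_square sum_product by (simp add: algebra_simps)
  have Z2: "integrable M (\<lambda>w. (Z w)\<^sup>2)"
    unfolding Z_square using yy by auto
  have "integral\<^sup>L M (\<lambda>w. (Z w)\<^sup>2) = (\<Sum>i\<in>I. \<Sum>i'\<in>I. c i * c i' * g i i')"
    unfolding Z_square g_def using yy by simp
  also have "\<dots> \<le> R * S"
    unfolding S_def using row unfolding g_def
    by (intro quadratic_form_le_row_sum) (auto simp: mult.commute)
  finally have Z_le: "integral\<^sup>L M (\<lambda>w. (Z w)\<^sup>2) \<le> R * S" .
  have "S = (\<Sum>i\<in>I. c i * integral\<^sup>L M (\<lambda>w. x w * y i w))"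
    unfolding S_def c_def by (simp add: power2_eq_square)
  also have "\<dots> = integral\<^sup>L M (\<lambda>w. x w * Z w)"
    unfolding Z_def using xy
    by (simp add: sum_distrib_left Bochner_Integration.integral_sum integrable_mult_right algebra_simps)
  also have "\<dots> \<le> (R * integral\<^sup>L M (\<lambda>w. (x w)\<^sup>2) + integral\<^sup>L M (\<lambda>w. (Z w)\<^sup>2) / R) / 2"
    using abs_integral_mult_le[of x M Z R] x2 Z2 \<open>R > 0\<close> by simp
  also have "\<dots> \<le> (R * integral\<^sup>L M (\<lambda>w. (x w)\<^sup>2) + S) / 2"
    using Z_le \<open>R > 0\<close> by (simp add: divide_le_eq mult.commute)
  finally show ?thesis unfolding S_def c_def by simp
qed

text \<open>\<open>\<Sum>\<^sub>i\<^sub>=\<^sub>1\<^sup>N 1/i \<le> 2\<surd>N\<close>, since \<open>1/(N+1) \<le> 2(\<surd>(N+1) - \<surd>N)\<close>.\<close>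
lemma harmonic_sum_le_sqrt: "(\<Sum>i\<in>{1..N}. 1 / real i) \<le> 2 * sqrt (real N)"
proof (induction N)
  case (Suc N)
  have step: "1 / (real N + 1) \<le> 2 * (sqrt (real N + 1) - sqrt (real N))"
  proof -
    have "sqrt (real N + 1) * 1 \<le> sqrt (real N + 1) * sqrt (real N + 1)"
      by (intro mult_left_mono) auto
    then have le: "sqrt (real N + 1) \<le> real N + 1" by simp
    have "sqrt (real N) \<le> sqrt (real N + 1)" by simp
    then have "sqrt (real N + 1) + sqrt (real N) \<le> 2 * (real N + 1)"
      using add_mono[OF le order_trans[OF _ le]] by simp
    moreover have "(sqrt (real N + 1) - sqrt (real N)) * (sqrt (real N + 1) + sqrt (real N)) = 1"
      by (simp add: algebra_simps)
    ultimately have "1 \<le> (sqrt (real N + 1) - sqrt (real N)) * (2 * (real N + 1))"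
      by (metis mult_left_mono diff_ge_0_iff_ge real_sqrt_le_mono le_add_same_cancel1 zero_le_one)
    then show ?thesis by (simp add: field_simps)
  qed
  have "(\<Sum>i\<in>{1..Suc N}. 1 / real i) = (\<Sum>i\<in>{1..N}. 1 / real i) + 1 / (real N + 1)"
    by simp
  also have "\<dots> \<le> 2 * sqrt (real (Suc N))" using Suc step by (simp add: add.commute)
  finally show ?case .
qed simp

text \<open>Telescoping tail of the inverse squares: \<open>\<Sum>\<^sub>k\<^sub>\<ge>\<^sub>m 1/(k-j)\<^sup>2 \<le> 2/(m-j)\<close> for \<open>j < m\<close>.\<close>
lemma inverse_square_tail_le:
  assumes "j < m"
  shows "(\<Sum>k\<in>{m..<m+N}. 1 / (real k - real j)\<^sup>2) \<le> 2 / (real m - real j)"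
proof -
  have "(\<Sum>k\<in>{m..<m+N}. 1 / (real k - real j)\<^sup>2) \<le> 2 / (real m - real j) - 2 / (real (m + N) - real j)"
  proof (induction N)
    case (Suc N)
    define x where "x = real (m + N) - real j"
    have x: "x \<ge> 1" using assms unfolding x_def by simp
    have "x * (x + 1) \<le> x * (2 * x)" using x by (intro mult_left_mono) auto
    then have "1 / x\<^sup>2 \<le> 2 / (x * (x + 1))"
      using x by (simp add: divide_simps power2_eq_square)
    also have "\<dots> = 2 / x - 2 / (x + 1)" using x by (simp add: field_simps)
    finally have "1 / x\<^sup>2 \<le> 2 / x - 2 / (x + 1)" .
    moreover have "(\<Sum>k\<in>{m..<m + Suc N}. 1 / (real k - real j)\<^sup>2)
        = (\<Sum>k\<in>{m..<m + N}. 1 / (real k - real j)\<^sup>2) + 1 / x\<^sup>2"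
      unfolding x_def by simp
    moreover have "2 / (real (m + Suc N) - real j) = 2 / (x + 1)"
      and "2 / (real (m + N) - real j) = 2 / x" unfolding x_def by simp_all
    ultimately show ?case using Suc by linarith
  qed simp
  moreover have "0 \<le> 2 / (real (m + N) - real j)" using assms by simp
  ultimately show ?thesis by linarith
qed

lemma inverse_distance_sum_le:
  fixes lo hi k :: nat
  assumes "k \<le> hi"
  shows "(\<Sum>k'\<in>{lo..hi} - {k}. 1 / \<bar>real k - real k'\<bar>) \<le> 4 * sqrt (real hi)"
proof -
  have left: "(\<Sum>k'\<in>{lo..<k}. 1 / \<bar>real k - real k'\<bar>) \<le> 2 * sqrt (real k)"
  proof -
    have "(\<Sum>k'\<in>{lo..<k}. 1 / \<bar>real k - real k'\<bar>) \<le> (\<Sum>k'\<in>{0..<k}. 1 / \<bar>real k - real k'\<bar>)"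
      by (rule sum_mono2) auto
    also have "\<dots> = (\<Sum>i\<in>{1..k}. 1 / real i)"
      by (rule sum.reindex_bij_witness[of _ "\<lambda>i. k - i" "\<lambda>k'. k - k'"]) (auto simp: of_nat_diff)
    finally show ?thesis using harmonic_sum_le_sqrt[of k] by linarith
  qed
  have right: "(\<Sum>k'\<in>{k<..hi}. 1 / \<bar>real k - real k'\<bar>) \<le> 2 * sqrt (real hi)"
  proof -
    have "(\<Sum>k'\<in>{k<..hi}. 1 / \<bar>real k - real k'\<bar>) = (\<Sum>i\<in>{1..hi - k}. 1 / real i)"
      by (rule sum.reindex_bij_witness[of _ "\<lambda>i. i + k" "\<lambda>k'. k' - k"]) (auto simp: of_nat_diff)
    also have "\<dots> \<le> (\<Sum>i\<in>{1..hi}. 1 / real i)"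
      by (rule sum_mono2) auto
    finally show ?thesis using harmonic_sum_le_sqrt[of hi] by linarith
  qed
  have "(\<Sum>k'\<in>{lo..hi} - {k}. 1 / \<bar>real k - real k'\<bar>) \<le> (\<Sum>k'\<in>{lo..<k} \<union> {k<..hi}. 1 / \<bar>real k - real k'\<bar>)"
    by (rule sum_mono2) auto
  also have "\<dots> = (\<Sum>k'\<in>{lo..<k}. 1 / \<bar>real k - real k'\<bar>) + (\<Sum>k'\<in>{k<..hi}. 1 / \<bar>real k - real k'\<bar>)"
    by (rule sum.union_disjoint) auto
  also have "\<dots> \<le> 4 * sqrt (real hi)"
    using left right real_sqrt_le_mono[of k hi] assms by linarith
  finally show ?thesis .
qed

text \<open>The right-hand side of condition (ii) at mesh scale \<open>s = 1/N\<close>, distance \<open>D/N\<close> and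
  left point \<open>a/N\<close>: both terms are at most \<open>C/(\<surd>N D)\<close>, because \<open>\<alpha> > 1\<close> and \<open>a \<ge> 1\<close>.\<close>
lemma covariance_bound_at_mesh:
  fixes N D a C \<alpha> :: real
  assumes N: "1 \<le> N" and a: "1 \<le> a" and D: "2 \<le> D" and C: "0 < C"
    and \<alpha>: "1 < \<alpha>" "\<alpha> \<le> 3/2"
  shows "C * (1 / N)\<^sup>2 * (D / N) powr (-\<alpha>) * (a / N) powr (-(3/2 - \<alpha>))
       + C * (1 / N)\<^sup>2 * (D / N) powr (-(3/2)) \<le> 2 * C / (sqrt N * D)"
proof -
  have first: "C * (1 / N)\<^sup>2 * (D / N) powr (-\<alpha>) * (a / N) powr (-(3/2 - \<alpha>))
      \<le> C * D powr (-1) * N powr (-1/2)"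
  proof -
    have "(a / N) powr (-(3/2 - \<alpha>)) \<le> (1 / N) powr (-(3/2 - \<alpha>))"
      using \<alpha> N a by (intro powr_mono2') (auto simp: field_simps)
    then have "C * (1 / N)\<^sup>2 * (D / N) powr (-\<alpha>) * (a / N) powr (-(3/2 - \<alpha>))
        \<le> C * (1 / N)\<^sup>2 * (D / N) powr (-\<alpha>) * (1 / N) powr (-(3/2 - \<alpha>))"
      using C by (intro mult_left_mono) auto
    also have "\<dots> = C * D powr (-\<alpha>) * (N powr (-2) * N powr \<alpha> * N powr (3/2 - \<alpha>))"
      using N D by (simp add: powr_divide powr_minus power2_eq_square powr_add[symmetric] field_simps)
    also have "N powr (-2) * N powr \<alpha> * N powr (3/2 - \<alpha>) = N powr (-1/2)"
      by (simp add: powr_add[symmetric])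
    also have "C * D powr (-\<alpha>) * N powr (-1/2) \<le> C * D powr (-1) * N powr (-1/2)"
      using \<alpha> D C by (intro mult_right_mono mult_left_mono powr_mono) auto
    finally show ?thesis .
  qed
  have second: "C * (1 / N)\<^sup>2 * (D / N) powr (-(3/2)) \<le> C * D powr (-1) * N powr (-1/2)"
  proof -
    have "C * (1 / N)\<^sup>2 * (D / N) powr (-(3/2)) = C * D powr (-(3/2)) * (N powr (-2) * N powr (3/2))"
      using N D by (simp add: powr_divide powr_minus power2_eq_square field_simps)
    also have "N powr (-2) * N powr (3/2) = N powr (-1/2)" by (simp add: powr_add[symmetric])
    also have "C * D powr (-(3/2)) * N powr (-1/2) \<le> C * D powr (-1) * N powr (-1/2)"
      using D C by (intro mult_right_mono mult_left_mono powr_mono) auto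
    finally show ?thesis .
  qed
  have "C * D powr (-1) * N powr (-1/2) = C / (sqrt N * D)"
    using N D by (simp add: powr_minus powr_half_sqrt[symmetric] field_simps)
  then show ?thesis using first second by linarith
qed

definition mesh_increment :: "(real \<Rightarrow> 'a \<Rightarrow> real) \<Rightarrow> nat \<Rightarrow> nat \<Rightarrow> 'a \<Rightarrow> real" where
  "mesh_increment W n a \<omega> = W ((real a + 1) / real n) \<omega> - W (real a / real n) \<omega>"

lemma beta_n_mesh_increment:
  "beta_n M W n a b = integral\<^sup>L M (\<lambda>\<omega>. mesh_increment W n a \<omega> * mesh_increment W n b \<omega>)"
  by (simp add: beta_n_def mesh_increment_def)

lemma beta_n_sym: "beta_n M W n a b = beta_n M W n b a"
  by (simp add: beta_n_def mult.commute)

definition square_discrepancy :: "'a measure \<Rightarrow> (real \<Rightarrow> 'a \<Rightarrow> real) \<Rightarrow> nat \<Rightarrow> nat \<Rightarrow> nat \<Rightarrow> real" where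
  "square_discrepancy M W n j k =
     \<bar>(beta_n M W n (2*j-1) (2*k-1))\<^sup>2 - (beta_n M W n (2*j-1) (2*k-2))\<^sup>2
      - (beta_n M W n (2*j-2) (2*k-1))\<^sup>2 + (beta_n M W n (2*j-2) (2*k-2))\<^sup>2\<bar>"

lemma abs_signed_sum_squares_le:
  fixes w x y z :: real
  shows "\<bar>w\<^sup>2 - x\<^sup>2 - y\<^sup>2 + z\<^sup>2\<bar> \<le> w\<^sup>2 + x\<^sup>2 + y\<^sup>2 + z\<^sup>2"
  using zero_le_power2[of w] zero_le_power2[of x] zero_le_power2[of y] zero_le_power2[of z]
  by (simp only: abs_le_iff) linarith

lemma floor_half_bounds:
  fixes x :: real
  shows "0 \<le> x \<Longrightarrow> 2 * real (nat \<lfloor>x / 2\<rfloor>) \<le> x"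
    and "2 \<le> x \<Longrightarrow> 1 \<le> nat \<lfloor>x / 2\<rfloor>"
proof -
  show "2 * real (nat \<lfloor>x / 2\<rfloor>) \<le> x" if "0 \<le> x"
    using that of_int_floor_le[of "x / 2"] by simp
  show "1 \<le> nat \<lfloor>x / 2\<rfloor>" if "2 \<le> x"
    using that by (simp add: le_nat_iff le_floor_iff)
qed

locale increment_covariance_bounds =
  fixes M :: "'a measure" and W :: "real \<Rightarrow> 'a \<Rightarrow> real" and T C1 C \<alpha> :: real
  assumes gaussian: "centered_gaussian_process M W"
    and increment_variance: "\<And>s t. 0 < s \<Longrightarrow> s \<le> t \<Longrightarrow> t \<le> T \<Longrightarrow>
      integral\<^sup>L M (\<lambda>\<omega>. (W t \<omega> - W (t - s) \<omega>)\<^sup>2) \<le> C1 * s powr (1/2)"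
    and increment_covariance: "\<And>s r t. 0 < s \<Longrightarrow> 2 * s \<le> r \<Longrightarrow> r \<le> T \<Longrightarrow>
      2 * s \<le> t \<Longrightarrow> t \<le> T \<Longrightarrow> 2 * s \<le> \<bar>t - r\<bar> \<Longrightarrow>
      \<bar>integral\<^sup>L M (\<lambda>\<omega>. (W t \<omega> - W (t - s) \<omega>) * (W r \<omega> - W (r - s) \<omega>))\<bar>
        \<le> C * s\<^sup>2 * \<bar>t - r\<bar> powr (-\<alpha>) * (min t r - s) powr (-(3/2 - \<alpha>))
           + C * s\<^sup>2 * \<bar>t - r\<bar> powr (-(3/2))"
    and C1_pos: "0 < C1" and C_pos: "0 < C" and alpha_gt_1: "1 < \<alpha>" and alpha_le: "\<alpha> \<le> 3/2"
    and T_pos: "0 < T"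
begin

text \<open>Increments are differences of two jointly Gaussian variables, hence square integrable.\<close>
lemma increment_square_integrable:
  assumes "0 \<le> u" "0 \<le> v"
  shows "(\<lambda>\<omega>. W u \<omega> - W v \<omega>) \<in> borel_measurable M"
    and "integrable M (\<lambda>\<omega>. (W u \<omega> - W v \<omega>)\<^sup>2)"
proof -
  let ?a = "\<lambda>s. if s = u then 1 else (-1::real)"
  have "gaussian_rv M (\<lambda>\<omega>. \<Sum>s\<in>{u,v}. ?a s * W s \<omega>)"
    using gaussian assms unfolding centered_gaussian_process_def by auto
  moreover have "u \<noteq> v \<Longrightarrow> (\<lambda>\<omega>. \<Sum>s\<in>{u,v}. ?a s * W s \<omega>) = (\<lambda>\<omega>. W u \<omega> - W v \<omega>)"
    by auto
  ultimately have "u \<noteq> v \<Longrightarrow> gaussian_rv M (\<lambda>\<omega>. W u \<omega> - W v \<omega>)" by simp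
  then show "(\<lambda>\<omega>. W u \<omega> - W v \<omega>) \<in> borel_measurable M"
    and "integrable M (\<lambda>\<omega>. (W u \<omega> - W v \<omega>)\<^sup>2)"
    using integrable_square_gaussian_rv by (cases "u = v"; auto simp: gaussian_rv_def)+
qed

lemma mesh_increment_measurable: "mesh_increment W n a \<in> borel_measurable M"
  unfolding mesh_increment_def[abs_def] by (rule increment_square_integrable) auto

lemma mesh_increment_square_integrable: "integrable M (\<lambda>\<omega>. (mesh_increment W n a \<omega>)\<^sup>2)"
  unfolding mesh_increment_def by (rule increment_square_integrable) auto

lemma mesh_increment_variance:
  assumes "1 \<le> n" and "real a + 1 \<le> real n * T"
  shows "integral\<^sup>L M (\<lambda>\<omega>. (mesh_increment W n a \<omega>)\<^sup>2) \<le> C1 / sqrt (real n)"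
proof -
  have e: "(real a + 1) / real n - 1 / real n = real a / real n"
    using assms by (simp add: field_simps)
  have "integral\<^sup>L M (\<lambda>\<omega>. (W ((real a + 1) / real n) \<omega> - W ((real a + 1) / real n - 1 / real n) \<omega>)\<^sup>2)
      \<le> C1 * (1 / real n) powr (1/2)"
    using assms by (intro increment_variance) (auto simp: field_simps)
  then show ?thesis
    unfolding e mesh_increment_def using assms by (simp add: powr_half_sqrt real_sqrt_divide)
qed

lemma beta_n_bound:
  assumes "1 \<le> n" and "real a + 1 \<le> real n * T" and "real b + 1 \<le> real n * T"
  shows "\<bar>beta_n M W n a b\<bar> \<le> C1 / sqrt (real n)"
proof -
  have "\<bar>beta_n M W n a b\<bar> \<le> (1 * integral\<^sup>L M (\<lambda>\<omega>. (mesh_increment W n a \<omega>)\<^sup>2)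
       + integral\<^sup>L M (\<lambda>\<omega>. (mesh_increment W n b \<omega>)\<^sup>2) / 1) / 2"
    unfolding beta_n_mesh_increment
    by (rule abs_integral_mult_le)
      (auto intro: mesh_increment_measurable mesh_increment_square_integrable)
  also have "\<dots> \<le> (C1 / sqrt (real n) + C1 / sqrt (real n)) / 2"
    using mesh_increment_variance assms by (intro divide_right_mono add_mono) simp_all
  finally show ?thesis by simp
qed

text \<open>Condition (ii) on the mesh: for \<open>1 \<le> a\<close> and \<open>a + 2 \<le> b\<close>,
  \<open>|\<beta>\<^sub>n(a,b)| \<le> 2C/(\<surd>n (b - a))\<close>, taking \<open>s = 1/n\<close>, \<open>t = (b+1)/n\<close>, \<open>r = (a+1)/n\<close> in (ii).\<close>
lemma beta_n_decay:
  assumes n: "1 \<le> n" and a: "1 \<le> a" and ab: "a + 2 \<le> b" and b: "real b + 1 \<le> real n * T"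
  shows "\<bar>beta_n M W n a b\<bar> \<le> 2 * C / (sqrt (real n) * (real b - real a))"
proof -
  define N where "N = real n"
  define s where "s = 1 / N"
  define t where "t = (real b + 1) / N"
  define r where "r = (real a + 1) / N"
  have N: "N \<ge> 1" using n N_def by simp
  have ab': "real a + 2 \<le> real b" using ab by linarith
  have ts: "t - s = real b / N" "r - s = real a / N"
    unfolding t_def r_def s_def using N by (auto simp: field_simps)
  have tr: "\<bar>t - r\<bar> = (real b - real a) / N" unfolding t_def r_def using N ab by (auto simp: field_simps)
  have mn: "min t r - s = real a / N" using ab ts unfolding t_def r_def using N
    by (auto simp: min_def field_simps)
  have "beta_n M W n a b = integral\<^sup>L M (\<lambda>\<omega>. (W t \<omega> - W (t - s) \<omega>) * (W r \<omega> - W (r - s) \<omega>))"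
    unfolding beta_n_def ts unfolding t_def r_def N_def by (simp add: mult.commute)
  moreover have "2 * s \<le> r" "2 * s \<le> t"
    unfolding s_def r_def t_def using N a ab' by (simp_all add: divide_right_mono)
  moreover have "2 * s \<le> \<bar>t - r\<bar>" unfolding tr s_def using N ab' by (simp add: divide_right_mono)
  moreover have "t \<le> T" "r \<le> T"
    unfolding t_def r_def using N b ab' N_def by (simp_all add: pos_divide_le_eq mult.commute)
  ultimately have "\<bar>beta_n M W n a b\<bar>
      \<le> C * s\<^sup>2 * \<bar>t - r\<bar> powr (-\<alpha>) * (min t r - s) powr (-(3/2 - \<alpha>)) + C * s\<^sup>2 * \<bar>t - r\<bar> powr (-(3/2))"
    using N s_def increment_covariance[of s r t] by simp
  also have "\<dots> \<le> 2 * C / (sqrt N * (real b - real a))"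
    unfolding tr mn unfolding s_def using N a ab' C_pos alpha_gt_1 alpha_le
    by (intro covariance_bound_at_mesh) auto
  finally show ?thesis unfolding N_def .
qed

lemma beta_n_decay_abs:
  assumes "1 \<le> n" and "1 \<le> a" and "1 \<le> b" and ab: "2 \<le> \<bar>real a - real b\<bar>"
    and "real a + 1 \<le> real n * T" and "real b + 1 \<le> real n * T"
  shows "\<bar>beta_n M W n a b\<bar> \<le> 2 * C / (sqrt (real n) * \<bar>real a - real b\<bar>)"
proof (cases "a \<le> b")
  case True
  then have "a + 2 \<le> b" using ab by linarith
  then show ?thesis using beta_n_decay[of n a b] True assms by simp
next
  case False
  then have "b + 2 \<le> a" using ab by linarith
  then show ?thesis using beta_n_decay[of n b a] False assms
    by (simp add: beta_n_sym[of M W n a b] abs_minus_commute)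
qed

text \<open>Pointwise bound for \<open>j < k\<close> when the left index is not the origin: the decay bound
  when the indices are at least 2 apart, the crude bound (with \<open>k - j = 1\<close>) otherwise.\<close>
lemma beta_n_square_bound:
  assumes n: "1 \<le> n" and pq: "p \<in> {1,2}" "q \<in> {1,2}"
    and jk: "j < k" and a1: "1 \<le> 2*j - p" and kT: "2 * real k \<le> real n * T"
  shows "(beta_n M W n (2*j-p) (2*k-q))\<^sup>2 \<le> (C1\<^sup>2 + 4 * C\<^sup>2) / (real n * (real k - real j)\<^sup>2)"
proof -
  define a where "a = 2*j-p"
  define b where "b = 2*k-q"
  have ra: "real a = 2 * real j - real p" unfolding a_def using pq a1 by (auto simp: of_nat_diff)
  have rb: "real b = 2 * real k - real q" unfolding b_def using pq jk by (auto simp: of_nat_diff)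
  have p12: "1 \<le> real p" "real p \<le> 2" "1 \<le> real q" "real q \<le> 2" using pq by auto
  have kj: "real k - real j \<ge> 1" using jk by simp
  have bT: "real b + 1 \<le> real n * T" and aT: "real a + 1 \<le> real n * T"
    using ra rb p12 kT kj by linarith+
  have np: "real n > 0" using n by simp
  have "(beta_n M W n a b)\<^sup>2 \<le> (C1\<^sup>2 + 4 * C\<^sup>2) / (real n * (real k - real j)\<^sup>2)"
  proof (cases "a + 2 \<le> b")
    case True
    have "\<bar>beta_n M W n a b\<bar> \<le> 2 * C / (sqrt (real n) * (real b - real a))"
      using a1 a_def by (intro beta_n_decay[OF n _ True bT]) simp
    also have "\<dots> \<le> 2 * C / (sqrt (real n) * (real k - real j))"
      using ra rb p12 kj np C_pos by (intro divide_left_mono mult_left_mono) auto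
    finally have "(beta_n M W n a b)\<^sup>2 \<le> (2 * C / (sqrt (real n) * (real k - real j)))\<^sup>2"
      by (metis abs_ge_zero power2_abs power_mono)
    also have "\<dots> = 4 * C\<^sup>2 / (real n * (real k - real j)\<^sup>2)"
      using np by (simp add: power2_eq_square field_simps)
    finally show ?thesis using np by (simp add: divide_right_mono order_trans)
  next
    case False
    have kj1: "real k - real j = 1" using False ra rb p12 kj by linarith
    have "\<bar>beta_n M W n a b\<bar> \<le> C1 / sqrt (real n)"
      by (rule beta_n_bound[OF n aT bT])
    then have "(beta_n M W n a b)\<^sup>2 \<le> (C1 / sqrt (real n))\<^sup>2"
      by (metis abs_ge_zero power2_abs power_mono)
    also have "\<dots> = C1\<^sup>2 / (real n * (real k - real j)\<^sup>2)"
      using np kj1 by (simp add: power2_eq_square field_simps)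
    finally show ?thesis using np by (simp add: divide_right_mono order_trans)
  qed
  then show ?thesis unfolding a_def b_def .
qed

lemma off_origin_row_bound:
  assumes n: "1 \<le> n" and pq: "p \<in> {1,2}" "q \<in> {1,2}" and a: "1 \<le> 2*j-p" and j: "j \<le> j1"
    and jk: "j1 \<le> k0" and k1T: "2 * real k1 \<le> real n * T"
  shows "(\<Sum>k\<in>{k0+1..k1}. (beta_n M W n (2*j-p) (2*k-q))\<^sup>2)
     \<le> (C1\<^sup>2 + 4 * C\<^sup>2) / real n * (2 / (real j1 + 1 - real j))"
proof -
  have "(\<Sum>k\<in>{k0+1..k1}. (beta_n M W n (2*j-p) (2*k-q))\<^sup>2)
      \<le> (C1\<^sup>2 + 4 * C\<^sup>2) / real n * (\<Sum>k\<in>{k0+1..k1}. 1 / (real k - real j)\<^sup>2)"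
    unfolding sum_distrib_left
  proof (intro sum_mono)
    fix k assume k: "k \<in> {k0+1..k1}"
    then have "2 * real k \<le> real n * T" using k1T by simp
    then show "(beta_n M W n (2*j-p) (2*k-q))\<^sup>2 \<le> (C1\<^sup>2 + 4 * C\<^sup>2) / real n * (1 / (real k - real j)\<^sup>2)"
      using k j jk a beta_n_square_bound[OF n pq, of j k] by auto
  qed
  also have "\<dots> \<le> (C1\<^sup>2 + 4 * C\<^sup>2) / real n * (2 / (real j1 + 1 - real j))"
  proof (rule mult_left_mono)
    have j': "j < j1 + 1" using j by simp
    have "(\<Sum>k\<in>{k0+1..k1}. 1 / (real k - real j)\<^sup>2) \<le> (\<Sum>k\<in>{j1+1..<j1+1+(k1-j1)}. 1 / (real k - real j)\<^sup>2)"
      using jk j by (intro sum_mono2) auto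
    also have "\<dots> \<le> 2 / (real (j1 + 1) - real j)" by (rule inverse_square_tail_le[OF j'])
    finally show "(\<Sum>k\<in>{k0+1..k1}. 1 / (real k - real j)\<^sup>2) \<le> 2 / (real j1 + 1 - real j)"
      by (simp add: add.commute)
  qed simp
  finally show ?thesis .
qed

text \<open>All rows of a block off the origin: the row bounds form a reversed harmonic sum,
  which is at most \<open>2\<surd>(j1) \<le> 2\<surd>(nT)\<close>.\<close>
lemma off_origin_rows_bound:
  assumes n: "1 \<le> n" and pq: "p \<in> {1,2}" "q \<in> {1,2}"
    and jk: "j1 \<le> k0" and j1T: "2 * real j1 \<le> real n * T" and k1T: "2 * real k1 \<le> real n * T"
  shows "(\<Sum>j\<in>{j\<in>{j0+1..j1}. 1 \<le> 2*j-p}. \<Sum>k\<in>{k0+1..k1}. (beta_n M W n (2*j-p) (2*k-q))\<^sup>2)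
     \<le> 4 * (C1\<^sup>2 + 4 * C\<^sup>2) * sqrt T / sqrt (real n)"
proof -
  define K where "K = C1\<^sup>2 + 4 * C\<^sup>2"
  have K: "K > 0" unfolding K_def using C1_pos by (simp add: add_pos_nonneg)
  have np: "real n > 0" using n by simp
  have "(\<Sum>j\<in>{j\<in>{j0+1..j1}. 1 \<le> 2*j-p}. \<Sum>k\<in>{k0+1..k1}. (beta_n M W n (2*j-p) (2*k-q))\<^sup>2)
      \<le> (\<Sum>j\<in>{j\<in>{j0+1..j1}. 1 \<le> 2*j-p}. K / real n * (2 / (real j1 + 1 - real j)))"
    unfolding K_def using off_origin_row_bound[OF n pq _ _ jk k1T] by (intro sum_mono) auto
  also have "\<dots> \<le> (\<Sum>j\<in>{1..j1}. K / real n * (2 / (real j1 + 1 - real j)))"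
    using K np by (intro sum_mono2) auto
  also have "\<dots> = 2 * K / real n * (\<Sum>i\<in>{1..j1}. 1 / real i)"
  proof -
    have reverse: "(\<Sum>i\<in>{1..j1}. 1 / real i) = (\<Sum>j\<in>{1..j1}. 1 / (real j1 + 1 - real j))"
      by (rule sum.reindex_bij_witness[of _ "\<lambda>i. j1 + 1 - i" "\<lambda>j. j1 + 1 - j"]) (auto simp: of_nat_diff)
    show ?thesis unfolding reverse sum_distrib_left by (rule sum.cong) simp_all
  qed
  also have "\<dots> \<le> 2 * K / real n * (2 * sqrt (real n * T))"
  proof -
    have "sqrt (real j1) \<le> sqrt (real n * T)" using j1T by simp
    then have "(\<Sum>i\<in>{1..j1}. 1 / real i) \<le> 2 * sqrt (real n * T)"
      using harmonic_sum_le_sqrt[of j1] by linarith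
    then show ?thesis using K np by (intro mult_left_mono) auto
  qed
  also have "\<dots> = 4 * K * sqrt T / sqrt (real n)"
  proof -
    have "real n = sqrt (real n) * sqrt (real n)" by simp
    then show ?thesis using np by (simp add: real_sqrt_mult field_simps)
  qed
  finally show ?thesis unfolding K_def .
qed

lemma beta_n_same_parity_decay:
  assumes n: "1 \<le> n" and q: "q \<in> {1,2}" and k: "2 \<le> k" and k': "2 \<le> k'" and kk': "k \<noteq> k'"
    and kT: "2 * real k \<le> real n * T" and k'T: "2 * real k' \<le> real n * T"
  shows "\<bar>beta_n M W n (2*k-q) (2*k'-q)\<bar> \<le> C / sqrt (real n) * (1 / \<bar>real k - real k'\<bar>)"
proof -
  have index: "real (2*i-q) = 2 * real i - real q" "1 \<le> 2*i-q" if "2 \<le> i" for i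
    using that q by (auto simp: of_nat_diff)
  have d: "\<bar>real (2*k-q) - real (2*k'-q)\<bar> = 2 * \<bar>real k - real k'\<bar>"
    using index(1)[OF k] index(1)[OF k'] by (auto simp: abs_if)
  have "1 \<le> \<bar>real k - real k'\<bar>" using kk' by (auto simp: abs_if)
  then have "2 \<le> \<bar>real (2*k-q) - real (2*k'-q)\<bar>" unfolding d by simp
  then have "\<bar>beta_n M W n (2*k-q) (2*k'-q)\<bar> \<le> 2 * C / (sqrt (real n) * \<bar>real (2*k-q) - real (2*k'-q)\<bar>)"
    using index[OF k] index[OF k'] q kT k'T by (intro beta_n_decay_abs[OF n]) auto
  then show ?thesis unfolding d by simp
qed

text \<open>Row sums of the Gram matrix of the increments \<open>\<Delta>\<^sub>2\<^sub>k\<^sub>-\<^sub>q\<close>, \<open>k0 < k \<le> k1\<close>, are bounded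
  uniformly in \<open>n\<close>: the diagonal by (i), the rest by (ii) and \<open>\<Sum> 1/|k-k'| = O(\<surd>n)\<close>.\<close>
lemma gram_row_sum_bound:
  assumes n: "1 \<le> n" and q: "q \<in> {1,2}" and k0: "1 \<le> k0" and k1T: "2 * real k1 \<le> real n * T"
    and k: "k \<in> {k0+1..k1}"
  shows "(\<Sum>k'\<in>{k0+1..k1}. \<bar>beta_n M W n (2*k-q) (2*k'-q)\<bar>) \<le> C1 + 4 * C * sqrt T"
proof -
  define K where "K = {k0+1..k1}"
  have np: "real n > 0" using n by simp
  have kK: "k \<in> K" using k unfolding K_def .
  have diagonal: "\<bar>beta_n M W n (2*k-q) (2*k-q)\<bar> \<le> C1"
  proof -
    have "real (2*k-q) + 1 \<le> real n * T" using k q k1T by (auto simp: of_nat_diff)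
    then have "\<bar>beta_n M W n (2*k-q) (2*k-q)\<bar> \<le> C1 / sqrt (real n)"
      by (intro beta_n_bound n)
    also have "\<dots> \<le> C1" using n C1_pos by (simp add: divide_le_eq)
    finally show ?thesis .
  qed
  have "(\<Sum>k'\<in>K. \<bar>beta_n M W n (2*k-q) (2*k'-q)\<bar>)
      = \<bar>beta_n M W n (2*k-q) (2*k-q)\<bar> + (\<Sum>k'\<in>K - {k}. \<bar>beta_n M W n (2*k-q) (2*k'-q)\<bar>)"
    using kK by (intro sum.remove) (simp_all add: K_def)
  also have "\<dots> \<le> C1 + C / sqrt (real n) * (\<Sum>k'\<in>K - {k}. 1 / \<bar>real k - real k'\<bar>)"
    unfolding sum_distrib_left using diagonal k0 kK k1T
    by (intro add_mono sum_mono beta_n_same_parity_decay[OF n q]) (auto simp: K_def)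
  also have "\<dots> \<le> C1 + C / sqrt (real n) * (4 * sqrt (real n * T))"
  proof -
    have "k \<le> k1" using kK unfolding K_def by simp
    then have "(\<Sum>k'\<in>K - {k}. 1 / \<bar>real k - real k'\<bar>) \<le> 4 * sqrt (real k1)"
      unfolding K_def by (rule inverse_distance_sum_le)
    moreover have "sqrt (real k1) \<le> sqrt (real n * T)" using k1T T_pos np by simp
    ultimately have "(\<Sum>k'\<in>K - {k}. 1 / \<bar>real k - real k'\<bar>) \<le> 4 * sqrt (real n * T)"
      by linarith
    then show ?thesis using C_pos by (intro add_left_mono mult_left_mono) auto
  qed
  also have "\<dots> = C1 + 4 * C * sqrt T"
    using np by (simp add: real_sqrt_mult)
  finally show ?thesis unfolding K_def .
qed

text \<open>The row of the origin, \<open>\<Sum>\<^sub>k \<beta>\<^sub>n(0, 2k-q)\<^sup>2\<close>, not covered by (ii): by the Bessel-type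
  inequality it is at most the Gram row bound times \<open>E[\<Delta>\<^sub>0\<^sup>2] \<le> C1/\<surd>n\<close>.\<close>
lemma origin_row_bound:
  assumes n: "1 \<le> n" and q: "q \<in> {1,2}" and k0: "1 \<le> k0"
    and k1T: "2 * real k1 \<le> real n * T" and nT: "1 \<le> real n * T"
  shows "(\<Sum>k\<in>{k0+1..k1}. (beta_n M W n 0 (2*k-q))\<^sup>2) \<le> (C1 + 4 * C * sqrt T) * (C1 / sqrt (real n))"
proof -
  have "(\<Sum>k\<in>{k0+1..k1}. (beta_n M W n 0 (2*k-q))\<^sup>2)
      \<le> (C1 + 4 * C * sqrt T) * integral\<^sup>L M (\<lambda>\<omega>. (mesh_increment W n 0 \<omega>)\<^sup>2)"
    unfolding beta_n_mesh_increment
  proof (rule bessel_gram_row_bound)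
    show "0 < C1 + 4 * C * sqrt T" using C1_pos C_pos T_pos by (simp add: add_pos_nonneg)
    show "(\<Sum>k'\<in>{k0+1..k1}. \<bar>integral\<^sup>L M (\<lambda>\<omega>. mesh_increment W n (2*k-q) \<omega> * mesh_increment W n (2*k'-q) \<omega>)\<bar>)
        \<le> C1 + 4 * C * sqrt T" if "k \<in> {k0+1..k1}" for k
      using gram_row_sum_bound[OF n q k0 k1T that] by (simp add: beta_n_mesh_increment)
  qed (auto intro: mesh_increment_measurable mesh_increment_square_integrable)
  also have "\<dots> \<le> (C1 + 4 * C * sqrt T) * (C1 / sqrt (real n))"
    using mesh_increment_variance[OF n, of 0] nT C1_pos C_pos T_pos
    by (intro mult_left_mono) (auto simp: add_nonneg_nonneg)
  finally show ?thesis .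
qed

text \<open>The constant in the bound on a block sum: off-origin rows plus the origin row.\<close>
definition block_constant :: real where
  "block_constant = 4 * (C1\<^sup>2 + 4 * C\<^sup>2) * sqrt T + (C1 + 4 * C * sqrt T) * C1"

lemma block_sum_bound:
  assumes n: "1 \<le> n" and pq: "p \<in> {1,2}" "q \<in> {1,2}"
    and j1: "1 \<le> j1" and jk: "j1 \<le> k0"
    and j1T: "2 * real j1 \<le> real n * T" and k1T: "2 * real k1 \<le> real n * T"
  shows "(\<Sum>j\<in>{j0+1..j1}. \<Sum>k\<in>{k0+1..k1}. (beta_n M W n (2*j-p) (2*k-q))\<^sup>2)
     \<le> block_constant / sqrt (real n)"
proof -
  define f where "f j = (\<Sum>k\<in>{k0+1..k1}. (beta_n M W n (2*j-p) (2*k-q))\<^sup>2)" for j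
  define A where "A = {j0+1..j1}"
  define B where "B = {j. 1 \<le> 2*j-p}"
  have origin: "(\<Sum>j\<in>A - B. f j) \<le> (C1 + 4 * C * sqrt T) * (C1 / sqrt (real n))"
  proof -
    have "A - B \<subseteq> {1}" unfolding A_def B_def using pq by auto
    then consider "A - B = {}" | "A - B = {1}" by blast
    then show ?thesis
    proof cases
      case 1
      show ?thesis unfolding 1 using C1_pos C_pos T_pos by (simp add: add_nonneg_nonneg)
    next
      case 2
      then have "1 \<notin> B" by blast
      then have p: "2*1 - p = 0" unfolding B_def by simp
      have "1 \<le> k0" "1 \<le> real n * T" using j1 jk j1T by linarith+
      then have "f 1 \<le> (C1 + 4 * C * sqrt T) * (C1 / sqrt (real n))"
        unfolding f_def p by (rule origin_row_bound[OF n pq(2) _ k1T])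
      then show ?thesis unfolding 2 by simp
    qed
  qed
  have "(\<Sum>j\<in>A. f j) = (\<Sum>j\<in>A \<inter> B. f j) + (\<Sum>j\<in>A - B. f j)"
    by (rule sum.Int_Diff) (simp add: A_def)
  also have "A \<inter> B = {j\<in>{j0+1..j1}. 1 \<le> 2*j-p}" unfolding A_def B_def by auto
  also have "(\<Sum>j\<in>{j\<in>{j0+1..j1}. 1 \<le> 2*j-p}. f j) \<le> 4 * (C1\<^sup>2 + 4 * C\<^sup>2) * sqrt T / sqrt (real n)"
    unfolding f_def by (rule off_origin_rows_bound[OF n pq jk j1T k1T])
  finally show ?thesis
    using origin unfolding f_def A_def block_constant_def by (simp add: add_divide_distrib)
qed

lemma discrepancy_sum_bound:
  assumes n: "1 \<le> n" and j1: "1 \<le> j1" and jk: "j1 \<le> k0"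
    and j1T: "2 * real j1 \<le> real n * T" and k1T: "2 * real k1 \<le> real n * T"
  shows "(\<Sum>j\<in>{j0+1..j1}. \<Sum>k\<in>{k0+1..k1}. square_discrepancy M W n j k)
     \<le> 4 * block_constant / sqrt (real n)"
proof -
  define G where "G p q = (\<Sum>j\<in>{j0+1..j1}. \<Sum>k\<in>{k0+1..k1}. (beta_n M W n (2*j-p) (2*k-q))\<^sup>2)"
    for p q :: nat
  have G: "G p q \<le> block_constant / sqrt (real n)" if "p \<in> {1,2}" "q \<in> {1,2}" for p q
    unfolding G_def by (rule block_sum_bound[OF n that j1 jk j1T k1T])
  have "(\<Sum>j\<in>{j0+1..j1}. \<Sum>k\<in>{k0+1..k1}. square_discrepancy M W n j k) \<le> G 1 1 + G 1 2 + G 2 1 + G 2 2"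
    unfolding G_def sum.distrib[symmetric] square_discrepancy_def
    by (intro sum_mono abs_signed_sum_squares_le)
  also have "\<dots> \<le> 4 * (block_constant / sqrt (real n))"
    using G[of 1 1] G[of 1 2] G[of 2 1] G[of 2 2] by simp
  finally show ?thesis by simp
qed

lemma discrepancy_sum_bound_at_times:
  assumes "0 < t1" "t1 \<le> t2" "t2 \<le> t3" "t3 \<le> T" and nt1: "2 \<le> real n * t1"
  shows "(\<Sum>j\<in>{nat \<lfloor>real n * t0 / 2\<rfloor> + 1 .. nat \<lfloor>real n * t1 / 2\<rfloor>}.
          \<Sum>k\<in>{nat \<lfloor>real n * t2 / 2\<rfloor> + 1 .. nat \<lfloor>real n * t3 / 2\<rfloor>}. square_discrepancy M W n j k)
     \<le> 4 * block_constant / sqrt (real n)"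
proof (rule discrepancy_sum_bound)
  show "1 \<le> n" using nt1 by (cases "n = 0") auto
  show "1 \<le> nat \<lfloor>real n * t1 / 2\<rfloor>" using nt1 by (rule floor_half_bounds)
  show "nat \<lfloor>real n * t1 / 2\<rfloor> \<le> nat \<lfloor>real n * t2 / 2\<rfloor>"
    using assms by (intro nat_mono floor_mono divide_right_mono mult_left_mono) auto
  have "real n * t1 \<le> real n * T" "real n * t3 \<le> real n * T"
    using assms by (auto intro: mult_left_mono)
  then show "2 * real (nat \<lfloor>real n * t1 / 2\<rfloor>) \<le> real n * T"
    and "2 * real (nat \<lfloor>real n * t3 / 2\<rfloor>) \<le> real n * T"
    using floor_half_bounds(1)[of "real n * t1"] floor_half_bounds(1)[of "real n * t3"] assms
    by (auto intro: order_trans)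
qed

end

lemma increment_covariance_bounds_from_conditions:
  assumes "centered_gaussian_process M W" and "cond_i M W T" and "cond_ii M W T" and "0 < T"
  shows "\<exists>C1 C \<alpha>. increment_covariance_bounds M W T C1 C \<alpha>"
proof -
  obtain C1 where "0 < C1" and "\<forall>s t. 0 < s \<and> s \<le> t \<and> t \<le> T \<longrightarrow>
      integral\<^sup>L M (\<lambda>\<omega>. (W t \<omega> - W (t - s) \<omega>)\<^sup>2) \<le> C1 * s powr (1/2)"
    using assms(2) unfolding cond_i_def by blast
  moreover obtain C \<alpha> where "0 < C" "1 < \<alpha>" "\<alpha> \<le> 3/2" and
     "\<forall>s r t. 0 < s \<and> 2 * s \<le> r \<and> r \<le> T \<and> 2 * s \<le> t \<and> t \<le> T \<and> \<bar>t - r\<bar> \<ge> 2 * s \<longrightarrow>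
        \<bar>integral\<^sup>L M (\<lambda>\<omega>. (W t \<omega> - W (t - s) \<omega>) * (W r \<omega> - W (r - s) \<omega>))\<bar>
          \<le> C * s\<^sup>2 * \<bar>t - r\<bar> powr (-\<alpha>) * (min t r - s) powr (-(3/2 - \<alpha>))
             + C * s\<^sup>2 * \<bar>t - r\<bar> powr (-(3/2))"
    using assms(3) unfolding cond_ii_def by blast
  ultimately have "increment_covariance_bounds M W T C1 C \<alpha>"
    using assms(1,4) by unfold_locales auto
  then show ?thesis by blast
qed

theorem lemma6p1:
  fixes M :: "'a measure" and W :: "real \<Rightarrow> 'a \<Rightarrow> real"
    and T t0 t1 t2 t3 :: real
  assumes "centered_gaussian_process M W"
    and "cond_i M W T" and "cond_ii M W T" and "cond_iv M W T"
    and "0 \<le> t0" and "t0 < t1" and "t1 \<le> t2" and "t2 < t3" and "t3 \<le> T"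
  shows "(\<lambda>n::nat.
      \<Sum>j\<in>{nat \<lfloor>real n * t0 / 2\<rfloor> + 1 .. nat \<lfloor>real n * t1 / 2\<rfloor>}.
      \<Sum>k\<in>{nat \<lfloor>real n * t2 / 2\<rfloor> + 1 .. nat \<lfloor>real n * t3 / 2\<rfloor>}.
        \<bar>(beta_n M W n (2*j-1) (2*k-1))\<^sup>2 - (beta_n M W n (2*j-1) (2*k-2))\<^sup>2
         - (beta_n M W n (2*j-2) (2*k-1))\<^sup>2 + (beta_n M W n (2*j-2) (2*k-2))\<^sup>2\<bar>)
     \<longlonglongrightarrow> 0"
proof -
  obtain C1 C \<alpha> where "increment_covariance_bounds M W T C1 C \<alpha>"
    using increment_covariance_bounds_from_conditions assms by fastforce
  then interpret increment_covariance_bounds M W T C1 C \<alpha> .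
  define c where "c = 4 * block_constant"
  let ?S = "\<lambda>n. \<Sum>j\<in>{nat \<lfloor>real n * t0 / 2\<rfloor> + 1 .. nat \<lfloor>real n * t1 / 2\<rfloor>}.
      \<Sum>k\<in>{nat \<lfloor>real n * t2 / 2\<rfloor> + 1 .. nat \<lfloor>real n * t3 / 2\<rfloor>}. square_discrepancy M W n j k"
  have "eventually (\<lambda>n::nat. 2 \<le> real n * t1) sequentially"
    using assms by real_asymp
  then have upper: "eventually (\<lambda>n. ?S n \<le> c / sqrt (real n)) sequentially"
    using discrepancy_sum_bound_at_times assms unfolding c_def
    by (elim eventually_mono) auto
  have lower: "eventually (\<lambda>n. 0 \<le> ?S n) sequentially"
    unfolding square_discrepancy_def by (intro always_eventually allI sum_nonneg) simp
  have "(\<lambda>n::nat. c / sqrt (real n)) \<longlonglongrightarrow> 0" by real_asymp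
  then have "?S \<longlonglongrightarrow> 0" by (rule tendsto_sandwich[OF lower upper tendsto_const])
  then show ?thesis unfolding square_discrepancy_def .
qed

end
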